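(* Let $\mathcal H_\mathrm{S},\mathcal H_\mathrm{M},\mathcal H_\mathrm{R}$ be finite-dimensional Hilbert spaces, $\mathcal H_\mathrm{R}=\sum_r E_r|r\rangle\langle r|$ a reservoir Hamiltonian with orthonormal eigenbasis $\{|r\rangle\}$, $\beta>0$, $P_r=e^{-\beta E_r}/\sum_{s}e^{-\beta E_s}$ and $\rho^\mathrm{i}_\mathrm{R}=\sum_r P_r|r\rangle\langle r|$. Let $\rho^\mathrm{i}_\mathrm{SM}$ be a positive definite density operator on $\mathcal H_\mathrm{S}\otimes\mathcal H_\mathrm{M}$, $U_\mathrm{SR}$ a unitary on $\mathcal H_\mathrm{S}\otimes\mathcal H_\mathrm{R}$, $U=U_\mathrm{SR}\otimes 1_\mathrm{M}$, and $\rho^\mathrm{f}_\mathrm{SM}=\mathrm{Tr}_\mathrm{R}[U(\rho^\mathrm{i}_\mathrm{SM}\otimes\rho^\mathrm{i}_\mathrm{R})U^\dagger]$. Fix spectral decompositions $\rho^\mathrm{i}_\mathrm{SM}=\sum_n P_n|n\rangle\langle n|$ and $\rho^\mathrm{f}_\mathrm{SM}=\sum_{n'}\tilde P_{n'}|n'\rangle\langle n'|$ (orthonormal eigenbases). For a trajectory $\gamma=(n,r,n',r')$ define $P_\mathrm{F}[\gamma]=|\langle n',r'|U|n,r\rangle|^2P_nP_r$ and the stochastic conditional entropy production $\sigma_\mathrm{S|M}(\gamma)=-\ln\tilde P_{n'}+\ln P_n+\beta(E_{r'}-E_r)$. Then $$\langle e^{-\sigma_\mathrm{S|M}}\rangl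e:=\sum_{\gamma:\,P_\mathrm{F}[\gamma]>0}P_\mathrm{F}[\gamma]\,e^{-\sigma_\mathrm{S|M}(\gamma)}=1.$$
   Context: The trajectories correspond to a two-point projective measurement in the joint eigenbasis of the system–memory state (initial and final) and in the energy eigenbasis of the reservoir, with the memory not evolving. The convention $e^{-\infty}=0$ is used if $\tilde P_{n'}=0$. In the paper, $\sigma_\mathrm{S|M}$ is written as $\Delta s_\mathrm{S|M}+\beta q_\mathrm{R}$ with $\Delta s_\mathrm{S|M}=-\ln(\tilde P_{n'}/P_b)+\ln(P_n/P_b)$ ($P_b$ eigenvalues of $\rho^\mathrm{i}_\mathrm{M}$, which cancel) and $q_\mathrm{R}=E_{r'}-E_r$. *)

theory Defs
  imports Complex_Main
begin

text \<open>Finite-dimensional operators are represented by their matrices with respect to a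
fixed orthonormal basis, indexed by a finite type: an operator on a space with basis
indexed by 'a is a function 'a => 'a => complex; a vector is a function 'a => complex.
Composite systems are indexed by product types. The reservoir basis (type 'r) is taken
to be the energy eigenbasis of the reservoir Hamiltonian.\<close>

definition mmult :: "('a::finite \<Rightarrow> 'a \<Rightarrow> complex) \<Rightarrow> ('a \<Rightarrow> 'a \<Rightarrow> complex) \<Rightarrow> 'a \<Rightarrow> 'a \<Rightarrow> complex" where
  "mmult A B i j = (\<Sum>k\<in>UNIV. A i k * B k j)"

definition adjoint :: "('a \<Rightarrow> 'a \<Rightarrow> complex) \<Rightarrow> 'a \<Rightarrow> 'a \<Rightarrow> complex" where
  "adjoint A i j = cnj (A j i)"

definition idop :: "'a \<Rightarrow> 'a \<Rightarrow> complex" where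
  "idop i j = (if i = j then 1 else 0)"

definition unitary_op :: "('a::finite \<Rightarrow> 'a \<Rightarrow> complex) \<Rightarrow> bool" where
  "unitary_op U \<longleftrightarrow> mmult (adjoint U) U = idop \<and> mmult U (adjoint U) = idop"

definition hermitian_op :: "('a \<Rightarrow> 'a \<Rightarrow> complex) \<Rightarrow> bool" where
  "hermitian_op A \<longleftrightarrow> adjoint A = A"

definition qform :: "('a::finite \<Rightarrow> 'a \<Rightarrow> complex) \<Rightarrow> ('a \<Rightarrow> complex) \<Rightarrow> complex" where
  "qform A v = (\<Sum>i\<in>UNIV. \<Sum>j\<in>UNIV. cnj (v i) * A i j * v j)"

definition trace_op :: "('a::finite \<Rightarrow> 'a \<Rightarrow> complex) \<Rightarrow> complex" where
  "trace_op A = (\<Sum>i\<in>UNIV. A i i)"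

definition pos_def_density :: "('a::finite \<Rightarrow> 'a \<Rightarrow> complex) \<Rightarrow> bool" where
  "pos_def_density A \<longleftrightarrow> hermitian_op A \<and> (\<forall>v. v \<noteq> (\<lambda>_. 0) \<longrightarrow> Re (qform A v) > 0)
      \<and> trace_op A = 1"

text \<open>A family of dim-many orthonormal vectors (hence an orthonormal basis).\<close>
definition orthonormal_family :: "('a::finite \<Rightarrow> 'a \<Rightarrow> complex) \<Rightarrow> bool" where
  "orthonormal_family phi \<longleftrightarrow>
     (\<forall>n k. (\<Sum>i\<in>UNIV. cnj (phi n i) * phi k i) = (if n = k then 1 else 0))"

definition spectral_decomp :: "('a::finite \<Rightarrow> 'a \<Rightarrow> complex) \<Rightarrow> ('a \<Rightarrow> real) \<Rightarrow> ('a \<Rightarrow> 'a \<Rightarrow> complex) \<Rightarrow> bool" where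
  "spectral_decomp A P phi \<longleftrightarrow> orthonormal_family phi \<and>
     (\<forall>i j. A i j = (\<Sum>n\<in>UNIV. complex_of_real (P n) * phi n i * cnj (phi n j)))"

definition gibbs :: "real \<Rightarrow> ('r::finite \<Rightarrow> real) \<Rightarrow> 'r \<Rightarrow> real" where
  "gibbs \<beta> E r = exp (- \<beta> * E r) / (\<Sum>s\<in>UNIV. exp (- \<beta> * E s))"

definition thermal_state :: "real \<Rightarrow> ('r::finite \<Rightarrow> real) \<Rightarrow> 'r \<Rightarrow> 'r \<Rightarrow> complex" where
  "thermal_state \<beta> E r r' = (if r = r' then complex_of_real (gibbs \<beta> E r) else 0)"

definition kron :: "('a \<Rightarrow> 'a \<Rightarrow> complex) \<Rightarrow> ('b \<Rightarrow> 'b \<Rightarrow> complex) \<Rightarrow> ('a \<times> 'b) \<Rightarrow> ('a \<times> 'b) \<Rightarrow> complex" where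
  "kron A B x y = A (fst x) (fst y) * B (snd x) (snd y)"

definition tensor_vec :: "('a \<Rightarrow> complex) \<Rightarrow> ('b \<Rightarrow> complex) \<Rightarrow> ('a \<times> 'b) \<Rightarrow> complex" where
  "tensor_vec v w x = v (fst x) * w (snd x)"

definition basis_vec :: "'a \<Rightarrow> 'a \<Rightarrow> complex" where
  "basis_vec r r0 = (if r = r0 then 1 else 0)"

text \<open>U = U_SR \<otimes> 1_M, as an operator on (H_S \<otimes> H_M) \<otimes> H_R (tensor factors reordered).\<close>
definition lift_U :: "('s \<times> 'r \<Rightarrow> 's \<times> 'r \<Rightarrow> complex) \<Rightarrow> ('s \<times> 'm) \<times> 'r \<Rightarrow> ('s \<times> 'm) \<times> 'r \<Rightarrow> complex" where
  "lift_U USR x y = USR (fst (fst x), snd x) (fst (fst y), snd y)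
                    * (if snd (fst x) = snd (fst y) then 1 else 0)"

definition ptrace2 :: "('a \<times> 'b::finite \<Rightarrow> 'a \<times> 'b \<Rightarrow> complex) \<Rightarrow> 'a \<Rightarrow> 'a \<Rightarrow> complex" where
  "ptrace2 A a b = (\<Sum>r\<in>UNIV. A (a, r) (b, r))"

definition final_state :: "('s::finite \<times> 'r::finite \<Rightarrow> 's \<times> 'r \<Rightarrow> complex) \<Rightarrow> real \<Rightarrow> ('r \<Rightarrow> real)
    \<Rightarrow> ('s \<times> 'm::finite \<Rightarrow> 's \<times> 'm \<Rightarrow> complex) \<Rightarrow> 's \<times> 'm \<Rightarrow> 's \<times> 'm \<Rightarrow> complex" where
  "final_state USR \<beta> E rho =
     ptrace2 (mmult (mmult (lift_U USR) (kron rho (thermal_state \<beta> E))) (adjoint (lift_U USR)))"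

definition mat_elem :: "('a::finite \<Rightarrow> 'a \<Rightarrow> complex) \<Rightarrow> ('a \<Rightarrow> complex) \<Rightarrow> ('a \<Rightarrow> complex) \<Rightarrow> complex" where
  "mat_elem A v w = (\<Sum>x\<in>UNIV. \<Sum>y\<in>UNIV. cnj (v x) * A x y * w y)"

definition PF :: "('s::finite \<times> 'r::finite \<Rightarrow> 's \<times> 'r \<Rightarrow> complex) \<Rightarrow> real \<Rightarrow> ('r \<Rightarrow> real)
    \<Rightarrow> ('s \<times> 'm::finite \<Rightarrow> real) \<Rightarrow> ('s \<times> 'm \<Rightarrow> 's \<times> 'm \<Rightarrow> complex) \<Rightarrow> ('s \<times> 'm \<Rightarrow> 's \<times> 'm \<Rightarrow> complex)
    \<Rightarrow> ('s \<times> 'm) \<times> 'r \<times> ('s \<times> 'm) \<times> 'r \<Rightarrow> real" where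
  "PF USR \<beta> E Pn phi psi \<gamma> = (case \<gamma> of (n, r, n', r') \<Rightarrow>
      (cmod (mat_elem (lift_U USR) (tensor_vec (psi n') (basis_vec r')) (tensor_vec (phi n) (basis_vec r))))\<^sup>2
      * Pn n * gibbs \<beta> E r)"

definition sigma_SM :: "real \<Rightarrow> ('r \<Rightarrow> real) \<Rightarrow> ('a \<Rightarrow> real) \<Rightarrow> ('a \<Rightarrow> real) \<Rightarrow> 'a \<times> 'r \<times> 'a \<times> 'r \<Rightarrow> real" where
  "sigma_SM \<beta> E Pn Pt \<gamma> = (case \<gamma> of (n, r, n', r') \<Rightarrow>
      - ln (Pt n') + ln (Pn n) + \<beta> * (E r' - E r))"

text \<open>e^{-sigma}, with the convention e^{-\<infinity>} = 0 when the final eigenvalue vanishes.\<close>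
definition exp_neg_sigma :: "real \<Rightarrow> ('r \<Rightarrow> real) \<Rightarrow> ('a \<Rightarrow> real) \<Rightarrow> ('a \<Rightarrow> real) \<Rightarrow> 'a \<times> 'r \<times> 'a \<times> 'r \<Rightarrow> real" where
  "exp_neg_sigma \<beta> E Pn Pt \<gamma> = (case \<gamma> of (n, r, n', r') \<Rightarrow>
      if Pt n' = 0 then 0 else exp (- sigma_SM \<beta> E Pn Pt \<gamma>))"

end

theory Submission
  imports Defs "HOL-Analysis.Cartesian_Space"
begin

text \<open>Multiplying the forward weight P_n P_r by e^(-sigma) replaces it by the final weight
Pt_n' P_r' (or by 0 when Pt_n' = 0), the weight of the time-reversed trajectory. For a fixed final
basis vector |n',r'>, the transition probabilities |<n',r'|U|n,r>|^2 sum over the initial basis to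
||U^dagger |n',r'>||^2 = 1 by Parseval and unitarity, so the average collapses to the sum of
Pt_n' P_r', which is 1 since the final state has unit trace. Positivity enters only to make the
logarithms meaningful: P_n > 0 by positive definiteness, and Pt_n' >= 0 because the final state is
a partial trace of a unitary conjugate of a positive operator.\<close>

definition mvmult :: "('a::finite \<Rightarrow> 'a \<Rightarrow> complex) \<Rightarrow> ('a \<Rightarrow> complex) \<Rightarrow> 'a \<Rightarrow> complex" where
  "mvmult A v i = (\<Sum>j\<in>UNIV. A i j * v j)"

definition vinner :: "('a::finite \<Rightarrow> complex) \<Rightarrow> ('a \<Rightarrow> complex) \<Rightarrow> complex" where
  "vinner v w = (\<Sum>i\<in>UNIV. cnj (v i) * w i)"

definition psd_op :: "('a::finite \<Rightarrow> 'a \<Rightarrow> complex) \<Rightarrow> bool" where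
  "psd_op A \<longleftrightarrow> (\<forall>v. 0 \<le> Re (qform A v))"

lemmas sum_delta_simps =
  if_distrib[of cnj] if_distrib[of "\<lambda>c. _ * c"] if_distrib[of "\<lambda>c. c * _"]
  sum.If_cases if_distrib[of "sum _"]

lemma sum_UNIV_prod:
  "(\<Sum>x\<in>(UNIV::('a::finite \<times> 'b::finite) set). f x) = (\<Sum>a\<in>UNIV. \<Sum>b\<in>UNIV. f (a, b))"
  by (simp add: sum.cartesian_product UNIV_Times_UNIV[symmetric] del: UNIV_Times_UNIV)

lemma mmult_assoc: "mmult (mmult A B) C = mmult A (mmult B C)"
  unfolding mmult_def sum_distrib_left sum_distrib_right
  by (intro ext, subst sum.swap) (simp add: mult.assoc)

lemma mmult_idop_left: "mmult idop A = A"
  by (simp add: fun_eq_iff mmult_def idop_def of_bool_def[symmetric])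

lemma trace_op_mmult_commute: "trace_op (mmult A B) = trace_op (mmult B A)"
  unfolding trace_op_def mmult_def by (subst sum.swap) (simp add: mult.commute)

lemma mvmult_mmult: "mvmult (mmult A B) v = mvmult A (mvmult B v)"
  unfolding mvmult_def mmult_def sum_distrib_left sum_distrib_right
  by (intro ext, subst sum.swap) (simp add: mult.assoc)

lemma mvmult_idop: "mvmult idop v = v"
  by (simp add: fun_eq_iff mvmult_def idop_def of_bool_def[symmetric])

lemma vinner_mvmult_adjoint: "vinner v (mvmult A w) = vinner (mvmult (Defs.adjoint A) v) w"
  unfolding vinner_def mvmult_def Defs.adjoint_def sum_distrib_left sum_distrib_right cnj_sum
  by (subst sum.swap) (simp add: mult_ac)

lemma vinner_cnj_commute: "vinner v w = cnj (vinner w v)"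
  by (simp add: vinner_def mult.commute)

lemma vinner_self: "vinner v v = of_real (\<Sum>i\<in>UNIV. (cmod (v i))\<^sup>2)"
  by (simp add: vinner_def complex_norm_square mult.commute del: of_real_power)

lemma qform_eq_vinner: "qform A v = vinner v (mvmult A v)"
  unfolding qform_def vinner_def mvmult_def sum_distrib_left by (simp add: mult.assoc)

lemma mat_elem_eq_vinner: "mat_elem A v w = vinner v (mvmult A w)"
  unfolding mat_elem_def vinner_def mvmult_def sum_distrib_left by (simp add: mult.assoc)

lemma mmult_idop_commute:
  fixes A B :: "'a::finite \<Rightarrow> 'a \<Rightarrow> complex"
  assumes "mmult A B = idop"
  shows "mmult B A = idop"
proof -
  have to_matrix: "mmult X Y = idop \<longleftrightarrow> (\<chi> i j. X i j) ** (\<chi> i j. Y i j) = (mat 1 :: complex^'a^'a)"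
    for X Y :: "'a \<Rightarrow> 'a \<Rightarrow> complex"
    by (simp add: mmult_def idop_def matrix_matrix_mult_def mat_def vec_eq_iff fun_eq_iff)
  show ?thesis
    using assms matrix_left_right_inverse by (simp only: to_matrix) blast
qed

lemma trace_op_conj:
  assumes "mmult (Defs.adjoint U) U = idop"
  shows "trace_op (mmult (mmult U K) (Defs.adjoint U)) = trace_op K"
  by (metis trace_op_mmult_commute mmult_assoc assms mmult_idop_left)

lemma qform_conj: "qform (mmult (mmult U K) (Defs.adjoint U)) w = qform K (mvmult (Defs.adjoint U) w)"
  by (simp add: qform_eq_vinner mvmult_mmult vinner_mvmult_adjoint)

lemma psd_op_conj: "psd_op K \<Longrightarrow> psd_op (mmult (mmult U K) (Defs.adjoint U))"
  by (simp add: psd_op_def qform_conj)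

lemma norm_mvmult_coisometry:
  assumes "mmult U (Defs.adjoint U) = idop"
  shows "(\<Sum>i\<in>UNIV. (cmod (mvmult (Defs.adjoint U) w i))\<^sup>2) = (\<Sum>i\<in>UNIV. (cmod (w i))\<^sup>2)"
proof -
  have "vinner (mvmult (Defs.adjoint U) w) (mvmult (Defs.adjoint U) w) = vinner w w"
    by (metis vinner_mvmult_adjoint mvmult_mmult assms mvmult_idop)
  then show ?thesis by (simp only: vinner_self of_real_eq_iff)
qed

lemma orthonormal_family_complete:
  assumes "orthonormal_family phi"
  shows "(\<Sum>n\<in>UNIV. phi n i * cnj (phi n j)) = (if i = j then 1 else 0)"
proof -
  define F where "F i n = phi n i" for i n
  have "mmult (Defs.adjoint F) F = idop"
    using assms by (simp add: mmult_def Defs.adjoint_def idop_def F_def fun_eq_iff orthonormal_family_def)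
  then have "mmult F (Defs.adjoint F) = idop" by (rule mmult_idop_commute)
  then show ?thesis by (simp add: mmult_def Defs.adjoint_def idop_def F_def fun_eq_iff)
qed

lemma parseval:
  assumes "orthonormal_family b"
  shows "(\<Sum>k\<in>UNIV. (cmod (vinner (b k) v))\<^sup>2) = (\<Sum>i\<in>UNIV. (cmod (v i))\<^sup>2)"
proof -
  have "of_real (\<Sum>k\<in>UNIV. (cmod (vinner (b k) v))\<^sup>2) = (\<Sum>k\<in>UNIV. cnj (vinner (b k) v) * vinner (b k) v)"
    by (simp add: complex_norm_square mult.commute del: of_real_power)
  also have "\<dots> = (\<Sum>k\<in>UNIV. \<Sum>i\<in>UNIV. \<Sum>j\<in>UNIV. cnj (v i) * v j * (b k i * cnj (b k j)))"
    unfolding vinner_def cnj_sum sum_product by (auto intro!: sum.cong simp: mult_ac)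
  also have "\<dots> = (\<Sum>i\<in>UNIV. \<Sum>k\<in>UNIV. \<Sum>j\<in>UNIV. cnj (v i) * v j * (b k i * cnj (b k j)))"
    by (rule sum.swap)
  also have "\<dots> = (\<Sum>i\<in>UNIV. \<Sum>j\<in>UNIV. cnj (v i) * v j * (\<Sum>k\<in>UNIV. b k i * cnj (b k j)))"
    unfolding sum_distrib_left by (rule sum.cong[OF refl], rule sum.swap)
  also have "\<dots> = vinner v v"
    by (simp add: orthonormal_family_complete[OF assms] vinner_def of_bool_def[symmetric])
  finally show ?thesis by (simp only: vinner_self of_real_eq_iff)
qed

lemma norm_orthonormal_family:
  assumes "orthonormal_family b"
  shows "(\<Sum>i\<in>UNIV. (cmod (b k i))\<^sup>2) = 1"
proof -
  have "vinner (b k) (b k) = 1"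
    using assms by (simp add: vinner_def orthonormal_family_def)
  then show ?thesis by (metis vinner_self of_real_eq_1_iff)
qed

lemma orthonormal_family_basis_vec: "orthonormal_family basis_vec"
  by (simp add: orthonormal_family_def basis_vec_def of_bool_def[symmetric])

lemma orthonormal_family_tensor:
  assumes "orthonormal_family phi" and "orthonormal_family chi"
  shows "orthonormal_family (\<lambda>(n, r). tensor_vec (phi n) (chi r))"
proof -
  have "(\<Sum>x\<in>UNIV. cnj (tensor_vec (phi n) (chi r) x) * tensor_vec (phi k) (chi s) x)
      = (\<Sum>a\<in>UNIV. cnj (phi n a) * phi k a) * (\<Sum>b\<in>UNIV. cnj (chi r b) * chi s b)" for n r k s
    by (simp add: tensor_vec_def sum_UNIV_prod sum_product mult_ac)
  then show ?thesis
    using assms by (auto simp: orthonormal_family_def)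
qed

lemma sum_sq_mat_elem_coisometry:
  assumes "mmult U (Defs.adjoint U) = idop" and "orthonormal_family b"
  shows "(\<Sum>k\<in>UNIV. (cmod (mat_elem U w (b k)))\<^sup>2) = (\<Sum>i\<in>UNIV. (cmod (w i))\<^sup>2)"
proof -
  have "cmod (mat_elem U w (b k)) = cmod (vinner (b k) (mvmult (Defs.adjoint U) w))" for k
    by (metis mat_elem_eq_vinner vinner_mvmult_adjoint vinner_cnj_commute complex_mod_cnj)
  then show ?thesis
    by (simp add: parseval[OF assms(2)] norm_mvmult_coisometry[OF assms(1)])
qed

lemma spectral_decomp_eigenvector:
  assumes "spectral_decomp A P phi"
  shows "mvmult A (phi n) = (\<lambda>i. of_real (P n) * phi n i)"
proof
  fix i
  have "mvmult A (phi n) i = (\<Sum>j\<in>UNIV. (\<Sum>m\<in>UNIV. of_real (P m) * phi m i * cnj (phi m j)) * phi n j)"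
    using assms by (simp add: mvmult_def spectral_decomp_def)
  also have "\<dots> = (\<Sum>m\<in>UNIV. of_real (P m) * phi m i * (\<Sum>j\<in>UNIV. cnj (phi m j) * phi n j))"
    unfolding sum_distrib_left sum_distrib_right by (subst sum.swap) (simp add: mult.assoc)
  also have "\<dots> = of_real (P n) * phi n i"
    using assms by (simp add: spectral_decomp_def orthonormal_family_def of_bool_def[symmetric])
  finally show "mvmult A (phi n) i = of_real (P n) * phi n i" .
qed

lemma spectral_decomp_qform:
  assumes "spectral_decomp A P phi"
  shows "qform A (phi n) = of_real (P n)"
proof -
  have "vinner (phi n) (phi n) = 1"
    using assms by (simp add: spectral_decomp_def orthonormal_family_def vinner_def)
  then show ?thesis
    unfolding qform_eq_vinner spectral_decomp_eigenvector[OF assms]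
    by (simp add: vinner_def mult.left_commute sum_distrib_left[symmetric])
qed

lemma spectral_decomp_trace:
  assumes "spectral_decomp A P phi"
  shows "trace_op A = of_real (\<Sum>n\<in>UNIV. P n)"
proof -
  have "trace_op A = (\<Sum>n\<in>UNIV. of_real (P n) * (\<Sum>i\<in>UNIV. cnj (phi n i) * phi n i))"
    using assms unfolding trace_op_def spectral_decomp_def sum_distrib_left
    by (subst sum.swap) (simp add: mult_ac)
  also have "\<dots> = of_real (\<Sum>n\<in>UNIV. P n)"
    using assms by (simp add: spectral_decomp_def orthonormal_family_def)
  finally show ?thesis .
qed

lemma spectral_decomp_sum_eq_1:
  assumes "spectral_decomp A P phi" and "trace_op A = 1"
  shows "(\<Sum>n\<in>UNIV. P n) = 1"
  using spectral_decomp_trace[OF assms(1)] assms(2) by (metis of_real_eq_1_iff)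

lemma spectral_decomp_psd_nonneg:
  assumes "spectral_decomp A P phi" and "psd_op A"
  shows "0 \<le> P n"
  using assms spectral_decomp_qform[OF assms(1)] by (metis psd_op_def Re_complex_of_real)

lemma spectral_decomp_pos_def_pos:
  assumes "spectral_decomp A P phi" and "pos_def_density A"
  shows "0 < P n"
proof -
  have "phi n \<noteq> (\<lambda>_. 0)"
    using assms(1) norm_orthonormal_family[of phi n] by (auto simp: spectral_decomp_def)
  then show ?thesis
    using assms spectral_decomp_qform[OF assms(1)] by (metis pos_def_density_def Re_complex_of_real)
qed

lemma psd_op_pos_def_density:
  assumes "pos_def_density A"
  shows "psd_op A"
  unfolding psd_op_def
proof
  fix v
  show "0 \<le> Re (qform A v)"
  proof (cases "v = (\<lambda>_. 0)")
    case True
    then show ?thesis by (simp add: qform_def)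
  next
    case False
    then show ?thesis using assms by (simp add: pos_def_density_def less_imp_le)
  qed
qed

lemma gibbs_pos: "0 < gibbs \<beta> E r"
  unfolding gibbs_def by (intro divide_pos_pos exp_gt_zero sum_pos) auto

lemma sum_gibbs: "(\<Sum>r\<in>UNIV. gibbs \<beta> E r) = 1"
proof -
  have "0 < (\<Sum>s\<in>UNIV. exp (- \<beta> * E s))" by (intro sum_pos) auto
  then show ?thesis unfolding gibbs_def by (simp add: sum_divide_distrib[symmetric])
qed

lemma qform_kron_thermal:
  "qform (kron A (thermal_state \<beta> E)) z
     = (\<Sum>r\<in>UNIV. of_real (gibbs \<beta> E r) * qform A (\<lambda>a. z (a, r)))"
proof -
  have "qform (kron A (thermal_state \<beta> E)) z
      = (\<Sum>a\<in>UNIV. \<Sum>r\<in>UNIV. \<Sum>b\<in>UNIV. of_real (gibbs \<beta> E r) * (cnj (z (a, r)) * A a b * z (b, r)))"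
    unfolding qform_def sum_UNIV_prod kron_def thermal_state_def
    by (simp add: sum_delta_simps mult_ac cong: if_cong)
  also have "\<dots> = (\<Sum>r\<in>UNIV. of_real (gibbs \<beta> E r) * qform A (\<lambda>a. z (a, r)))"
    unfolding qform_def sum_distrib_left by (rule sum.swap)
  finally show ?thesis .
qed

lemma psd_op_kron_thermal: "psd_op A \<Longrightarrow> psd_op (kron A (thermal_state \<beta> E))"
  unfolding psd_op_def qform_kron_thermal
  by (simp add: sum_nonneg mult_nonneg_nonneg less_imp_le[OF gibbs_pos])

lemma trace_op_kron_thermal: "trace_op (kron A (thermal_state \<beta> E)) = trace_op A"
proof -
  have "trace_op (kron A (thermal_state \<beta> E)) = trace_op A * of_real (\<Sum>r\<in>UNIV. gibbs \<beta> E r)"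
    by (simp add: trace_op_def sum_UNIV_prod kron_def thermal_state_def sum_product)
  then show ?thesis by (simp add: sum_gibbs)
qed

lemma qform_ptrace2: "qform (ptrace2 M) v = (\<Sum>r\<in>UNIV. qform M (tensor_vec v (basis_vec r)))"
proof -
  have "qform (ptrace2 M) v = (\<Sum>a\<in>UNIV. \<Sum>b\<in>UNIV. \<Sum>r\<in>UNIV. cnj (v a) * M (a, r) (b, r) * v b)"
    unfolding qform_def ptrace2_def sum_distrib_left sum_distrib_right by simp
  also have "\<dots> = (\<Sum>r\<in>UNIV. \<Sum>a\<in>UNIV. \<Sum>b\<in>UNIV. cnj (v a) * M (a, r) (b, r) * v b)"
    by (subst sum.swap, rule sum.cong[OF refl], rule sum.swap)
  also have "\<dots> = (\<Sum>r\<in>UNIV. qform M (tensor_vec v (basis_vec r)))"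
    unfolding qform_def sum_UNIV_prod tensor_vec_def basis_vec_def
    by (simp add: sum_delta_simps cong: if_cong)
  finally show ?thesis .
qed

lemma psd_op_ptrace2: "psd_op M \<Longrightarrow> psd_op (ptrace2 M)"
  unfolding psd_op_def qform_ptrace2 by (simp add: sum_nonneg)

lemma trace_op_ptrace2: "trace_op (ptrace2 M) = trace_op M"
  by (simp add: trace_op_def ptrace2_def sum_UNIV_prod)

lemma adjoint_lift_U: "Defs.adjoint (lift_U U) = lift_U (Defs.adjoint U)"
  by (auto simp: fun_eq_iff Defs.adjoint_def lift_U_def)

lemma mmult_lift_U: "mmult (lift_U A) (lift_U B) = lift_U (mmult A B)"
  by (simp add: fun_eq_iff mmult_def lift_U_def sum_UNIV_prod sum_delta_simps cong: if_cong)

lemma lift_U_idop: "lift_U idop = idop"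
  by (auto simp: fun_eq_iff lift_U_def idop_def prod_eq_iff)

lemma unitary_op_lift_U: "unitary_op U \<Longrightarrow> unitary_op (lift_U U)"
  by (simp add: unitary_op_def adjoint_lift_U mmult_lift_U lift_U_idop)

lemma psd_op_final_state: "psd_op rho \<Longrightarrow> psd_op (final_state USR \<beta> E rho)"
  unfolding final_state_def by (intro psd_op_ptrace2 psd_op_conj psd_op_kron_thermal)

lemma trace_op_final_state:
  fixes rho :: "'s::finite \<times> 'm::finite \<Rightarrow> 's \<times> 'm \<Rightarrow> complex"
    and USR :: "'s \<times> 'r::finite \<Rightarrow> 's \<times> 'r \<Rightarrow> complex"
  assumes "unitary_op USR"
  shows "trace_op (final_state USR \<beta> E rho) = trace_op rho"
proof -
  have "mmult (Defs.adjoint (lift_U USR)) (lift_U USR :: ('s \<times> 'm) \<times> 'r \<Rightarrow> _) = idop"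
    using unitary_op_lift_U[OF assms] unfolding unitary_op_def by blast
  then show ?thesis
    by (simp add: final_state_def trace_op_ptrace2 trace_op_conj trace_op_kron_thermal)
qed

lemma sum_trajectories:
  fixes f :: "'a::finite \<times> 'b::finite \<times> 'a \<times> 'b \<Rightarrow> 'c::comm_monoid_add"
  shows "(\<Sum>\<gamma>\<in>UNIV. f \<gamma>) = (\<Sum>(n', r')\<in>UNIV. \<Sum>(n, r)\<in>UNIV. f (n, r, n', r'))"
proof -
  have "(\<Sum>\<gamma>\<in>UNIV. f \<gamma>) = (\<Sum>(n, r)\<in>UNIV. \<Sum>(n', r')\<in>UNIV. f (n, r, n', r'))"
    by (simp add: sum_UNIV_prod)
  also have "\<dots> = (\<Sum>(n', r')\<in>UNIV. \<Sum>(n, r)\<in>UNIV. f (n, r, n', r'))"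
    unfolding split_def by (rule sum.swap)
  finally show ?thesis .
qed

lemma gibbs_mult_exp_diff: "gibbs \<beta> E r * exp (\<beta> * E r - \<beta> * E r') = gibbs \<beta> E r'"
  by (simp add: gibbs_def mult_exp_exp)

lemma gibbs_weights_mult_exp_neg_sigma:
  assumes "0 < Pn n" and "0 \<le> Pt n'"
  shows "Pn n * gibbs \<beta> E r * exp_neg_sigma \<beta> E Pn Pt (n, r, n', r') = Pt n' * gibbs \<beta> E r'"
proof (cases "Pt n' = 0")
  case False
  then have "0 < Pt n'" using assms(2) by simp
  then have "exp (- sigma_SM \<beta> E Pn Pt (n, r, n', r')) = Pt n' / Pn n * exp (\<beta> * E r - \<beta> * E r')"
    using assms(1) by (simp add: sigma_SM_def exp_add exp_diff algebra_simps)
  then show ?thesis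
    using False assms(1) by (simp add: exp_neg_sigma_def gibbs_mult_exp_diff flip: mult.assoc)
qed (simp add: exp_neg_sigma_def)

lemma PF_nonneg:
  assumes "\<And>n. 0 \<le> Pn n"
  shows "0 \<le> PF USR \<beta> E Pn phi psi \<gamma>"
  using assms less_imp_le[OF gibbs_pos]
  by (auto simp: PF_def split: prod.split intro!: mult_nonneg_nonneg)

lemma PF_mult_exp_neg_sigma:
  assumes "0 < Pn n" and "0 \<le> Pt n'"
  shows "PF USR \<beta> E Pn phi psi (n, r, n', r') * exp_neg_sigma \<beta> E Pn Pt (n, r, n', r')
    = (cmod (mat_elem (lift_U USR) (tensor_vec (psi n') (basis_vec r')) (tensor_vec (phi n) (basis_vec r))))\<^sup>2
      * (Pt n' * gibbs \<beta> E r')"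
  using gibbs_weights_mult_exp_neg_sigma[of Pn n Pt n' \<beta> E r r', OF assms] by (simp add: PF_def mult_ac)

lemma sum_sq_mat_elem_lift_U:
  assumes "unitary_op USR" and "orthonormal_family phi" and "orthonormal_family psi"
  shows "(\<Sum>(n, r)\<in>UNIV.
      (cmod (mat_elem (lift_U USR) (tensor_vec (psi n') (basis_vec r')) (tensor_vec (phi n) (basis_vec r))))\<^sup>2) = 1"
proof -
  have basis: "orthonormal_family (\<lambda>(n, r). tensor_vec (phi n) (basis_vec r))"
    and unit: "(\<Sum>x\<in>UNIV. (cmod (tensor_vec (psi n') (basis_vec r') x))\<^sup>2) = 1"
    using assms(2,3) norm_orthonormal_family[OF orthonormal_family_tensor, of psi basis_vec "(n', r')"]
    by (simp_all add: orthonormal_family_tensor orthonormal_family_basis_vec)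
  have "mmult (lift_U USR) (Defs.adjoint (lift_U USR)) = idop"
    using unitary_op_lift_U[OF assms(1)] unfolding unitary_op_def by blast
  from sum_sq_mat_elem_coisometry[OF this basis] show ?thesis
    using unit by (simp add: split_def)
qed

theorem theorem4:
  fixes USR :: "'s::finite \<times> 'r::finite \<Rightarrow> 's \<times> 'r \<Rightarrow> complex"
    and rho :: "'s \<times> 'm::finite \<Rightarrow> 's \<times> 'm \<Rightarrow> complex"
    and E :: "'r \<Rightarrow> real" and \<beta> :: real
    and Pn Pt :: "'s \<times> 'm \<Rightarrow> real"
    and phi psi :: "'s \<times> 'm \<Rightarrow> 's \<times> 'm \<Rightarrow> complex"
  assumes "\<beta> > 0"
    and "pos_def_density rho"
    and "unitary_op USR"
    and "spectral_decomp rho Pn phi"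
    and "spectral_decomp (final_state USR \<beta> E rho) Pt psi"
  shows "(\<Sum>\<gamma>\<in>{\<gamma>. PF USR \<beta> E Pn phi psi \<gamma> > 0}.
            PF USR \<beta> E Pn phi psi \<gamma> * exp_neg_sigma \<beta> E Pn Pt \<gamma>) = 1"
proof -
  let ?PF = "PF USR \<beta> E Pn phi psi" and ?e = "exp_neg_sigma \<beta> E Pn Pt"
  have on: "orthonormal_family phi" "orthonormal_family psi"
    using assms(4,5) by (simp_all add: spectral_decomp_def)
  have Pn_pos: "0 < Pn n" for n
    using assms(4,2) by (rule spectral_decomp_pos_def_pos)
  have Pt_nonneg: "0 \<le> Pt n" for n
    using assms(5) psd_op_final_state[OF psd_op_pos_def_density[OF assms(2)]]
    by (rule spectral_decomp_psd_nonneg)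
  have Pt_sum: "(\<Sum>n\<in>UNIV. Pt n) = 1"
    using assms(2) trace_op_final_state[OF assms(3), of \<beta> E rho]
    by (intro spectral_decomp_sum_eq_1[OF assms(5)]) (simp add: pos_def_density_def)
  have "(\<Sum>\<gamma>\<in>{\<gamma>. ?PF \<gamma> > 0}. ?PF \<gamma> * ?e \<gamma>) = (\<Sum>\<gamma>\<in>UNIV. ?PF \<gamma> * ?e \<gamma>)"
    using PF_nonneg[of Pn, OF less_imp_le[OF Pn_pos]]
    by (intro sum.mono_neutral_left) (auto simp: order_less_le)
  also have "\<dots> = (\<Sum>(n', r')\<in>UNIV. \<Sum>(n, r)\<in>UNIV. (cmod (mat_elem (lift_U USR)
      (tensor_vec (psi n') (basis_vec r')) (tensor_vec (phi n) (basis_vec r))))\<^sup>2 * (Pt n' * gibbs \<beta> E r'))"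
    by (simp only: sum_trajectories PF_mult_exp_neg_sigma[where Pn = Pn and Pt = Pt, OF Pn_pos Pt_nonneg])
  also have "\<dots> = (\<Sum>(n', r')\<in>UNIV. Pt n' * gibbs \<beta> E r')"
    using sum_sq_mat_elem_lift_U[OF assms(3) on] by (simp add: split_def sum_distrib_right[symmetric])
  also have "\<dots> = (\<Sum>n'\<in>UNIV. Pt n') * (\<Sum>r'\<in>UNIV. gibbs \<beta> E r')"
    by (simp only: sum_product sum.cartesian_product UNIV_Times_UNIV)
  finally show ?thesis
    by (simp add: Pt_sum sum_gibbs)
qed

end
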